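(* Let $\lambda\in\mathbb R$ and $\eta\ge0$. Let $(P_n)_{n\ge0}$ be the monic polynomials with $P_{-1}=0$, $P_0=1$, $xP_0=P_1$, $xP_1=P_2+\lambda P_1+P_0$ and $xP_n=P_{n+1}+\lambda P_n+(1+\eta)P_{n-1}$ for $n\ge2$, let $\mu_{\lambda,\eta}$ be their compactly supported orthogonality measure, and let $\partial^\dagger_{\lambda,\eta}$ be the bounded operator on $L^2(\mathbb R,\mu_{\lambda,\eta})$ determined by $\partial^\dagger_{\lambda,\eta}P_n=P_{n+1}$, $n\ge0$. Let $\Psi_{\lambda,\eta+1}(w)=\dfrac{w}{1+\lambda w+(\eta+1)w^2}$ and let $\Psi^{-1}_{\lambda,\eta+1}$ be its compositional inverse near $0$ (with $\Psi^{-1}_{\lambda,\eta+1}(0)=0$). Then there exists $\varepsilon>0$ such that for all real $z$ with $|z|<\varepsilon$, in $L^2(\mu_{\lambda,\eta})$, $$\partial^\dagger_{\lambda,\eta}(1-xz)^{-1}=\left(\frac{x-\Psi^{-1}_{\lambda,\eta+1}(z)}{1+\lambda\Psi^{-1}_{\lambda,\eta+1}(z)+\eta\bigl(\Psi^{-1}_{\lambda,\eta+1}(z)\bigr)^2}\right)(1-xz)^{-1},$$ and, for $0<|z|<\varepsilon$, with $R(z)=\sqrt{(1-\lambda z)^2-4z^2(\eta+1)}$ (principal branch, $R(0)=1$), this equals $$\left(x\,\frac{4z^2(\eta+1)^2}{\bigl(2\eta+1+\lambda z+R(z)\bigr)\bigl(1-\lambda z-R(z)\bigr)}-\frac{2z(\eta+1)}{2\eta+1+\lambda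 z+R(z)}\right)(1-xz)^{-1}.$$
   Context: For $|z|$ small, $x\mapsto(1-xz)^{-1}$ is a bounded continuous function on the support of $\mu_{\lambda,\eta}$, hence an element of $L^2(\mu_{\lambda,\eta})$; $x$ denotes multiplication by the variable. *)

theory Defs
  imports "HOL-Probability.Probability" "HOL-Computational_Algebra.Polynomial"
begin

fun Pmu :: "real \<Rightarrow> real \<Rightarrow> nat \<Rightarrow> real poly" where
  "Pmu lam eta 0 = 1"
| "Pmu lam eta (Suc 0) = [:0, 1:]"
| "Pmu lam eta (Suc (Suc n)) =
     [:- lam, 1:] * Pmu lam eta (Suc n) - smult (if n = 0 then 1 else 1 + eta) (Pmu lam eta n)"

definition sq_int :: "real measure \<Rightarrow> (real \<Rightarrow> real) \<Rightarrow> bool" where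
  "sq_int M f \<longleftrightarrow> f \<in> borel_measurable M \<and> integrable M (\<lambda>x. (f x)\<^sup>2)"

text \<open>A bounded linear operator on L^2(M), acting on representatives and
  compatible with almost-everywhere equality.\<close>
definition bounded_L2_op :: "real measure \<Rightarrow> ((real \<Rightarrow> real) \<Rightarrow> (real \<Rightarrow> real)) \<Rightarrow> bool" where
  "bounded_L2_op M T \<longleftrightarrow>
     (\<forall>f. sq_int M f \<longrightarrow> sq_int M (T f)) \<and>
     (\<forall>f g. sq_int M f \<longrightarrow> sq_int M g \<longrightarrow> (AE x in M. f x = g x) \<longrightarrow> (AE x in M. T f x = T g x)) \<and>
     (\<forall>f g. sq_int M f \<longrightarrow> sq_int M g \<longrightarrow> (AE x in M. T (\<lambda>t. f t + g t) x = T f x + T g x)) \<and>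
     (\<forall>f c. sq_int M f \<longrightarrow> (AE x in M. T (\<lambda>t. c * f t) x = c * T f x)) \<and>
     (\<exists>C. \<forall>f. sq_int M f \<longrightarrow> (\<integral>x. (T f x)\<^sup>2 \<partial>M) \<le> C * (\<integral>x. (f x)\<^sup>2 \<partial>M))"

definition Psi :: "real \<Rightarrow> real \<Rightarrow> real \<Rightarrow> real" where
  "Psi lam eta w = w / (1 + lam * w + eta * w\<^sup>2)"

end

theory Submission
  imports Defs
begin

text \<open>
  The generating function of the \<open>P n\<close> is
  \<open>\<Sum>n. P n x * w^n = (1 + \<lambda> w + \<eta> w\<^sup>2) / (1 - (x - \<lambda>) w + (\<eta> + 1) w\<^sup>2)\<close>, and for
  \<open>z = Psi \<lambda> (\<eta> + 1) w\<close> the denominator factors as \<open>(1 + \<lambda> w + (\<eta> + 1) w\<^sup>2) (1 - x z)\<close>.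
  Hence \<open>1 / (1 - x z)\<close> is a constant multiple of \<open>\<Sum>n. P n x * w^n\<close>, and the shift sends it
  to the same multiple of \<open>\<Sum>n. P (n + 1) x * w^n = (\<Sum>n. P n x * w^n - 1) / w\<close>, which is the
  claimed multiple of \<open>1 / (1 - x z)\<close>. Applying the shift termwise is legitimate because
  \<open>\<bar>P n x\<bar> \<le> M^n\<close> on the compact support makes the partial sums converge uniformly there, and a
  bounded operator on \<open>L\<^sup>2\<close> is closed. The closed form in \<open>R\<close> merely rewrites the coefficient,
  using \<open>R = 1 - \<lambda> z - 2 (\<eta> + 1) z w\<close>.
\<close>

lemma square_add_le: "(a + b)\<^sup>2 \<le> 2 * a\<^sup>2 + 2 * (b::real)\<^sup>2"
proof -
  have "(a + b)\<^sup>2 + (a - b)\<^sup>2 = 2 * a\<^sup>2 + 2 * b\<^sup>2" by algebra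
  then show ?thesis by (metis le_add_same_cancel1 zero_le_power2)
qed

lemma power2_le_of_abs_le: "\<bar>a\<bar> \<le> c \<Longrightarrow> a\<^sup>2 \<le> (c::real)\<^sup>2"
  by (metis abs_ge_zero order_trans power2_le_iff_abs_le)

lemma sq_int_diff:
  assumes "sq_int M f" "sq_int M g" shows "sq_int M (\<lambda>x. f x - g x)"
proof -
  have m: "f \<in> borel_measurable M" "g \<in> borel_measurable M"
    and i: "integrable M (\<lambda>x. 2 * (f x)\<^sup>2 + 2 * (- g x)\<^sup>2)"
    using assms by (auto simp: sq_int_def)
  have "integrable M (\<lambda>x. (f x - g x)\<^sup>2)"
  proof (rule Bochner_Integration.integrable_bound[OF i])
    show "(\<lambda>x. (f x - g x)\<^sup>2) \<in> borel_measurable M" using m by measurable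
    show "AE x in M. norm ((f x - g x)\<^sup>2) \<le> norm (2 * (f x)\<^sup>2 + 2 * (- g x)\<^sup>2)"
      using square_add_le[of "f _" "- g _"] by (intro AE_I2) simp
  qed
  then show ?thesis using m by (auto simp: sq_int_def)
qed

lemma sq_int_of_AE_abs_le:
  assumes "prob_space M" "h \<in> borel_measurable M" "AE x in M. \<bar>h x\<bar> \<le> c"
  shows "sq_int M h"
proof -
  interpret prob_space M by fact
  have "AE x in M. norm ((h x)\<^sup>2) \<le> c\<^sup>2"
    using assms(3) by eventually_elim (simp add: power2_le_of_abs_le)
  then have "integrable M (\<lambda>x. (h x)\<^sup>2)"
    using assms(2) by (intro integrable_const_bound[where B="c\<^sup>2"]) auto
  then show ?thesis using assms(2) by (simp add: sq_int_def)
qed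

lemma sq_int_of_AE_abs_diff_le:
  assumes M: "prob_space M" and g: "sq_int M g" and f: "f \<in> borel_measurable M"
    and fg: "AE x in M. \<bar>f x - g x\<bar> \<le> c"
  shows "sq_int M f"
proof -
  have "sq_int M (\<lambda>x. g x - (g x - f x))"
  proof (rule sq_int_diff[OF g sq_int_of_AE_abs_le[OF M]])
    show "(\<lambda>x. g x - f x) \<in> borel_measurable M" using f g by (auto simp: sq_int_def)
    show "AE x in M. \<bar>g x - f x\<bar> \<le> c" using fg by (simp add: abs_minus_commute)
  qed
  then show ?thesis by simp
qed

lemma integral_square_le_of_AE_abs_le:
  assumes "prob_space M" "sq_int M h" "AE x in M. \<bar>h x\<bar> \<le> c"
  shows "(\<integral>x. (h x)\<^sup>2 \<partial>M) \<le> c\<^sup>2"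
proof -
  interpret prob_space M by fact
  have "(\<integral>x. (h x)\<^sup>2 \<partial>M) \<le> (\<integral>x. c\<^sup>2 \<partial>M)"
    using assms(2,3) by (intro integral_mono_AE)
      (auto simp: sq_int_def elim!: eventually_mono intro: power2_le_of_abs_le)
  then show ?thesis using prob_space by simp
qed

lemma bounded_L2_op_sq_int: "bounded_L2_op M T \<Longrightarrow> sq_int M f \<Longrightarrow> sq_int M (T f)"
  unfolding bounded_L2_op_def by blast

lemma bounded_L2_op_add:
  "bounded_L2_op M T \<Longrightarrow> sq_int M f \<Longrightarrow> sq_int M g \<Longrightarrow>
    AE x in M. T (\<lambda>t. f t + g t) x = T f x + T g x"
  unfolding bounded_L2_op_def by blast

lemma bounded_L2_op_scale:
  "bounded_L2_op M T \<Longrightarrow> sq_int M f \<Longrightarrow> AE x in M. T (\<lambda>t. c * f t) x = c * T f x"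
  unfolding bounded_L2_op_def by blast

lemma bounded_L2_op_norm_bound:
  assumes "bounded_L2_op M T"
  obtains C where "\<And>f. sq_int M f \<Longrightarrow> (\<integral>x. (T f x)\<^sup>2 \<partial>M) \<le> C * (\<integral>x. (f x)\<^sup>2 \<partial>M)"
  using assms unfolding bounded_L2_op_def by blast

lemma bounded_L2_op_AE_eq_of_uniform_approx:
  assumes M: "prob_space M" and T: "bounded_L2_op M T"
    and f: "f \<in> borel_measurable M" and g: "g \<in> borel_measurable M" and S: "\<And>n. sq_int M (S n)"
    and approx: "\<And>n. AE x in M. \<bar>f x - S n x\<bar> \<le> \<epsilon> n"
    and image_approx: "\<And>n. AE x in M. \<bar>T (S n) x - g x\<bar> \<le> \<delta> n"
    and \<epsilon>: "\<epsilon> \<longlonglongrightarrow> 0" and \<delta>: "\<delta> \<longlonglongrightarrow> 0"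
  shows "AE x in M. T f x = g x"
proof -
  obtain C where C: "\<And>h. sq_int M h \<Longrightarrow> (\<integral>x. (T h x)\<^sup>2 \<partial>M) \<le> C * (\<integral>x. (h x)\<^sup>2 \<partial>M)"
    using bounded_L2_op_norm_bound[OF T] by blast
  note T_sq_int = bounded_L2_op_sq_int[OF T]
  have f_sq_int: "sq_int M f" by (rule sq_int_of_AE_abs_diff_le[OF M S f approx])
  have g_sq_int: "sq_int M g"
    using image_approx[of 0] by (intro sq_int_of_AE_abs_diff_le[OF M T_sq_int[OF S] g]) (simp add: abs_minus_commute)
  define I where "I = (\<integral>x. (T f x - g x)\<^sup>2 \<partial>M)"
  have defect: "sq_int M (\<lambda>x. T f x - g x)" by (rule sq_int_diff[OF T_sq_int[OF f_sq_int] g_sq_int])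
  have I_le: "I \<le> 2 * \<bar>C\<bar> * (\<epsilon> n)\<^sup>2 + 2 * (\<delta> n)\<^sup>2" for n
  proof -
    define h where "h = (\<lambda>t. f t - S n t)"
    have h: "sq_int M h" unfolding h_def by (rule sq_int_diff[OF f_sq_int S])
    have h_approx: "AE x in M. \<bar>h x\<bar> \<le> \<epsilon> n" using approx[of n] by (simp add: h_def)
    have e: "sq_int M (\<lambda>x. T (S n) x - g x)" by (rule sq_int_diff[OF T_sq_int[OF S] g_sq_int])
    have "(\<lambda>t. h t + S n t) = f" by (simp add: h_def)
    then have "AE x in M. T f x = T h x + T (S n) x"
      using bounded_L2_op_add[OF T h S[of n]] by simp
    then have "AE x in M. T f x - g x = T h x + (T (S n) x - g x)" by eventually_elim simp
    then have "AE x in M. (T f x - g x)\<^sup>2 \<le> 2 * (T h x)\<^sup>2 + 2 * (T (S n) x - g x)\<^sup>2"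
      by eventually_elim (simp only: square_add_le)
    then have "I \<le> (\<integral>x. 2 * (T h x)\<^sup>2 + 2 * (T (S n) x - g x)\<^sup>2 \<partial>M)"
      unfolding I_def using defect T_sq_int[OF h] e
      by (intro integral_mono_AE) (auto simp: sq_int_def)
    also have "\<dots> = 2 * (\<integral>x. (T h x)\<^sup>2 \<partial>M) + 2 * (\<integral>x. (T (S n) x - g x)\<^sup>2 \<partial>M)"
      using T_sq_int[OF h] e by (simp add: sq_int_def)
    also have "\<dots> \<le> 2 * (\<bar>C\<bar> * (\<epsilon> n)\<^sup>2) + 2 * (\<delta> n)\<^sup>2"
    proof -
      have "(\<integral>x. (T h x)\<^sup>2 \<partial>M) \<le> C * (\<integral>x. (h x)\<^sup>2 \<partial>M)" by (rule C[OF h])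
      also have "\<dots> \<le> \<bar>C\<bar> * (\<integral>x. (h x)\<^sup>2 \<partial>M)"
        by (intro mult_right_mono integral_nonneg_AE) auto
      also have "\<dots> \<le> \<bar>C\<bar> * (\<epsilon> n)\<^sup>2"
        using integral_square_le_of_AE_abs_le[OF M h h_approx]
        by (intro mult_left_mono) auto
      finally show ?thesis
        using integral_square_le_of_AE_abs_le[OF M e image_approx] by linarith
    qed
    finally show ?thesis by (simp add: algebra_simps)
  qed
  have "(\<lambda>n. 2 * \<bar>C\<bar> * (\<epsilon> n)\<^sup>2 + 2 * (\<delta> n)\<^sup>2) \<longlonglongrightarrow> 2 * \<bar>C\<bar> * 0\<^sup>2 + 2 * 0\<^sup>2"
    by (intro tendsto_intros \<epsilon> \<delta>)
  then have "I \<le> 2 * \<bar>C\<bar> * 0\<^sup>2 + 2 * 0\<^sup>2"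
    by (rule tendsto_lowerbound) (use I_le in auto)
  then have "I = 0" unfolding I_def by (simp add: antisym)
  then have "AE x in M. (T f x - g x)\<^sup>2 = 0"
    using defect integral_nonneg_eq_0_iff_AE[of M "\<lambda>x. (T f x - g x)\<^sup>2"] by (simp add: I_def sq_int_def)
  then show ?thesis by eventually_elim simp
qed

locale compactly_supported_prob = prob_space \<mu> for \<mu> :: "real measure" +
  fixes K :: "real set"
  assumes sets_eq_borel: "sets \<mu> = sets borel" and compact_support: "compact K"
    and null_outside_support: "emeasure \<mu> (UNIV - K) = 0"
begin

lemma borel_measurable_of_borel: "h \<in> borel_measurable borel \<Longrightarrow> h \<in> borel_measurable \<mu>"
  by (metis measurable_cong_sets[OF sets_eq_borel refl])

lemma AE_in_support: "AE x in \<mu>. x \<in> K"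
proof (rule AE_I')
  have "UNIV - K \<in> sets \<mu>"
    using sets_eq_borel compact_support by (simp add: borel_open compact_imp_closed open_Diff)
  then show "UNIV - K \<in> null_sets \<mu>" using null_outside_support by (simp add: null_setsI)
qed auto

lemma AE_abs_le_of_support: "(\<And>x. x \<in> K \<Longrightarrow> \<bar>h x\<bar> \<le> c) \<Longrightarrow> AE x in \<mu>. \<bar>h x\<bar> \<le> c"
  using AE_in_support by (rule AE_mp) auto

lemma sq_int_of_bounded_on_support:
  "h \<in> borel_measurable borel \<Longrightarrow> (\<And>x. x \<in> K \<Longrightarrow> \<bar>h x\<bar> \<le> c) \<Longrightarrow> sq_int \<mu> h"
  using sq_int_of_AE_abs_le[OF prob_space_axioms borel_measurable_of_borel AE_abs_le_of_support] .

lemma sq_int_continuous: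
  assumes "continuous_on UNIV h" shows "sq_int \<mu> h"
proof -
  have "compact (h ` K)"
    using assms compact_support compact_continuous_image continuous_on_subset by blast
  then obtain c where "\<forall>y\<in>h ` K. norm y \<le> c" using compact_imp_bounded bounded_iff by metis
  then show ?thesis
    using assms by (intro sq_int_of_bounded_on_support[of h c] borel_measurable_continuous_onI) auto
qed

lemma bounded_L2_op_sum:
  assumes T: "bounded_L2_op \<mu> T" and p: "\<And>k. continuous_on UNIV (p k)"
    and Tp: "\<And>k. AE x in \<mu>. T (p k) x = q k x"
  shows "AE x in \<mu>. T (\<lambda>t. \<Sum>k<N. a k * p k t) x = (\<Sum>k<N::nat. a k * q k x)"
proof (induction N)
  case 0
  show ?case
    using bounded_L2_op_scale[OF T sq_int_continuous[OF p[of 0]], of 0] by simp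
next
  case (Suc N)
  have "AE x in \<mu>. T (\<lambda>t. (\<Sum>k<N. a k * p k t) + a N * p N t) x
      = T (\<lambda>t. \<Sum>k<N. a k * p k t) x + T (\<lambda>t. a N * p N t) x"
    using p by (intro bounded_L2_op_add[OF T] sq_int_continuous continuous_intros)
  with Suc.IH bounded_L2_op_scale[OF T sq_int_continuous[OF p[of N]], of "a N"] Tp[of N]
  show ?case by eventually_elim simp
qed

end

lemma poly_Pmu_Suc_Suc:
  "poly (Pmu lam eta (Suc (Suc n))) x =
     (x - lam) * poly (Pmu lam eta (Suc n)) x - (if n = 0 then 1 else 1 + eta) * poly (Pmu lam eta n) x"
  by (simp add: algebra_simps)

lemma abs_poly_Pmu_le:
  fixes lam eta x M :: real
  assumes eta: "0 \<le> eta" and M: "\<bar>x\<bar> + \<bar>lam\<bar> + eta + 2 \<le> M"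
  shows "\<bar>poly (Pmu lam eta n) x\<bar> \<le> M ^ n"
proof -
  have M1: "1 \<le> M" using eta M by linarith
  have growth: "\<bar>x - lam\<bar> * M + (1 + eta) \<le> M * M"
  proof -
    have "\<bar>x - lam\<bar> * M \<le> (M - eta - 2) * M" using M M1 by (intro mult_right_mono) auto
    moreover have "(eta + 2) * 1 \<le> (eta + 2) * M" using M1 eta by (intro mult_left_mono) auto
    ultimately show ?thesis by (simp add: algebra_simps)
  qed
  have "\<bar>poly (Pmu lam eta n) x\<bar> \<le> M ^ n \<and> \<bar>poly (Pmu lam eta (Suc n)) x\<bar> \<le> M ^ Suc n"
  proof (induction n)
    case 0
    have "\<bar>x\<bar> \<le> M" using M eta by linarith
    then show ?case using M1 by simp
  next
    case (Suc n)
    let ?c = "if n = 0 then 1 else 1 + eta"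
    have "\<bar>poly (Pmu lam eta (Suc (Suc n))) x\<bar>
        \<le> \<bar>x - lam\<bar> * \<bar>poly (Pmu lam eta (Suc n)) x\<bar> + \<bar>?c\<bar> * \<bar>poly (Pmu lam eta n) x\<bar>"
      unfolding poly_Pmu_Suc_Suc by (simp add: abs_mult[symmetric] abs_triangle_ineq4)
    also have "\<dots> \<le> \<bar>x - lam\<bar> * (M * M ^ n) + (1 + eta) * M ^ n"
      using Suc.IH eta by (intro add_mono mult_mono) auto
    also have "\<dots> = (\<bar>x - lam\<bar> * M + (1 + eta)) * M ^ n" by (simp add: algebra_simps)
    also have "\<dots> \<le> M * M * M ^ n" using growth M1 by (intro mult_right_mono) auto
    finally show ?case using Suc.IH by simp
  qed
  then show ?thesis ..
qed

text \<open>The remainder of the truncated generating function of the \<open>P\<^sub>k\<close>.\<close>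
definition Pmu_tail :: "real \<Rightarrow> real \<Rightarrow> nat \<Rightarrow> real \<Rightarrow> real \<Rightarrow> real" where
  "Pmu_tail lam eta n x w =
     poly (Pmu lam eta (Suc n)) x * w ^ Suc n - (1 + eta) * poly (Pmu lam eta n) x * w ^ Suc (Suc n)"

lemma Pmu_partial_sum_identity:
  "(1 - (x - lam) * w + (1 + eta) * w\<^sup>2) * (\<Sum>k<Suc (Suc n). poly (Pmu lam eta k) x * w ^ k)
     = 1 + lam * w + eta * w\<^sup>2 - Pmu_tail lam eta (Suc n) x w"
proof (induction n)
  case 0
  then show ?case by (simp add: Pmu_tail_def algebra_simps power2_eq_square)
next
  case (Suc n)
  then show ?case
    by (simp only: sum.lessThan_Suc[of _ "Suc (Suc n)"] distrib_left)
      (simp only: Pmu_tail_def poly_Pmu_Suc_Suc[of lam eta "Suc n"], simp add: algebra_simps power2_eq_square)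
qed

lemma abs_Pmu_tail_le:
  fixes lam eta x w M :: real
  assumes eta: "0 \<le> eta" and M: "\<bar>x\<bar> + \<bar>lam\<bar> + eta + 2 \<le> M" and w: "\<bar>w\<bar> \<le> 1"
  shows "\<bar>Pmu_tail lam eta n x w\<bar> \<le> (2 + eta) * (M * \<bar>w\<bar>) ^ Suc n"
proof -
  have M1: "1 \<le> M" using eta M by linarith
  have "\<bar>poly (Pmu lam eta (Suc n)) x\<bar> * \<bar>w\<bar> ^ Suc n \<le> M ^ Suc n * \<bar>w\<bar> ^ Suc n"
    by (rule mult_right_mono[OF abs_poly_Pmu_le[OF eta M]]) simp
  then have leading: "\<bar>poly (Pmu lam eta (Suc n)) x * w ^ Suc n\<bar> \<le> (M * \<bar>w\<bar>) ^ Suc n"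
    by (simp only: abs_mult power_abs power_mult_distrib)
  have "\<bar>poly (Pmu lam eta n) x * w ^ Suc (Suc n)\<bar> \<le> M ^ n * (M * \<bar>w\<bar> ^ Suc n)"
    unfolding abs_mult power_abs
  proof (rule mult_mono)
    have "\<bar>w\<bar> ^ Suc (Suc n) \<le> 1 * \<bar>w\<bar> ^ Suc n"
      unfolding power_Suc[of _ "Suc n"] using w by (intro mult_right_mono) auto
    also have "\<dots> \<le> M * \<bar>w\<bar> ^ Suc n" using M1 by (intro mult_right_mono) auto
    finally show "\<bar>w\<bar> ^ Suc (Suc n) \<le> M * \<bar>w\<bar> ^ Suc n" .
  qed (use abs_poly_Pmu_le[OF eta M] M1 in auto)
  also have "\<dots> = (M * \<bar>w\<bar>) ^ Suc n" by (simp add: power_mult_distrib)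
  finally have "(1 + eta) * \<bar>poly (Pmu lam eta n) x * w ^ Suc (Suc n)\<bar> \<le> (1 + eta) * (M * \<bar>w\<bar>) ^ Suc n"
    using eta by (intro mult_left_mono) auto
  then have subleading: "\<bar>(1 + eta) * poly (Pmu lam eta n) x * w ^ Suc (Suc n)\<bar> \<le> (1 + eta) * (M * \<bar>w\<bar>) ^ Suc n"
    using eta by (simp add: abs_mult mult.assoc)
  show ?thesis
    using abs_triangle_ineq4[of "poly (Pmu lam eta (Suc n)) x * w ^ Suc n"
        "(1 + eta) * poly (Pmu lam eta n) x * w ^ Suc (Suc n)"] leading subleading
    unfolding Pmu_tail_def by (simp add: algebra_simps)
qed

lemma abs_divide_mult_le:
  fixes r u v :: real
  assumes "1/2 \<le> \<bar>u\<bar>" "1/2 \<le> \<bar>v\<bar>"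
  shows "\<bar>r / (u * v)\<bar> \<le> 4 * \<bar>r\<bar>"
proof -
  have "1/2 * (1/2) \<le> \<bar>u\<bar> * \<bar>v\<bar>" using assms by (intro mult_mono) auto
  then have "\<bar>r\<bar> * 1 \<le> \<bar>r\<bar> * (4 * (\<bar>u\<bar> * \<bar>v\<bar>))" by (intro mult_left_mono) auto
  moreover have "0 < \<bar>u\<bar> * \<bar>v\<bar>" using assms by simp
  ultimately show ?thesis by (simp add: abs_mult abs_divide pos_divide_le_eq mult_ac)
qed

lemma half_le_quadratic:
  fixes lam c w :: real
  assumes "0 \<le> c" and "\<bar>lam\<bar> * \<bar>w\<bar> \<le> 1/2"
  shows "1/2 \<le> 1 + lam * w + c * w\<^sup>2"
proof -
  have "- 1/2 \<le> lam * w" using assms(2) by (simp add: abs_mult[symmetric] abs_le_iff)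
  then show ?thesis using assms(1) zero_le_power2[of w] by (simp add: add_increasing2)
qed

context
  fixes lam eta x z w M :: real
  assumes eta: "0 \<le> eta" and M: "\<bar>x\<bar> + \<bar>lam\<bar> + eta + 2 \<le> M" and wM: "M * \<bar>w\<bar> \<le> 1/2"
    and wz: "w = z * (1 + lam * w + (1 + eta) * w\<^sup>2)" and xz: "\<bar>x * z\<bar> \<le> 1/2"
begin

private lemma abs_w_le_half: "\<bar>w\<bar> \<le> 1/2"
proof -
  have "1 * \<bar>w\<bar> \<le> M * \<bar>w\<bar>" using M eta by (intro mult_right_mono) auto
  then show ?thesis using wM by linarith
qed

private lemma half_le_denominators:
  "1/2 \<le> 1 + lam * w + eta * w\<^sup>2" "1/2 \<le> 1 + lam * w + (1 + eta) * w\<^sup>2" "1/2 \<le> \<bar>1 - x * z\<bar>"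
proof -
  have "\<bar>lam\<bar> * \<bar>w\<bar> \<le> M * \<bar>w\<bar>" using M eta by (intro mult_right_mono) auto
  then have lw: "\<bar>lam\<bar> * \<bar>w\<bar> \<le> 1/2" using wM by linarith
  show "1/2 \<le> 1 + lam * w + eta * w\<^sup>2" by (rule half_le_quadratic[OF eta lw])
  show "1/2 \<le> 1 + lam * w + (1 + eta) * w\<^sup>2" by (rule half_le_quadratic[OF _ lw]) (use eta in simp)
  show "1/2 \<le> \<bar>1 - x * z\<bar>" using xz by linarith
qed

private lemma resolvent_factorization:
  "(1 + lam * w + (1 + eta) * w\<^sup>2) * (1 - x * z) = 1 - (x - lam) * w + (1 + eta) * w\<^sup>2"
proof -
  let ?s = "1 + lam * w + (1 + eta) * w\<^sup>2"
  have "?s * (1 - x * z) = ?s - x * (z * ?s)" by (simp add: algebra_simps)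
  also have "\<dots> = ?s - x * w" using wz by simp
  also have "\<dots> = 1 - (x - lam) * w + (1 + eta) * w\<^sup>2" by (simp add: algebra_simps)
  finally show ?thesis .
qed

lemma Pmu_resolvent_partial_sum_error:
  "\<bar>1 / (1 - x * z) - (1 + lam * w + (1 + eta) * w\<^sup>2) / (1 + lam * w + eta * w\<^sup>2)
      * (\<Sum>k<Suc (Suc n). poly (Pmu lam eta k) x * w ^ k)\<bar>
    \<le> 4 * ((2 + eta) * (M * \<bar>w\<bar>) ^ Suc (Suc n))"
proof -
  define s b u where "s = 1 + lam * w + (1 + eta) * w\<^sup>2" and "b = 1 + lam * w + eta * w\<^sup>2"
    and "u = 1 - x * z"
  define S where "S = (\<Sum>k<Suc (Suc n). poly (Pmu lam eta k) x * w ^ k)"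
  define r where "r = Pmu_tail lam eta (Suc n) x w"
  have b: "1/2 \<le> \<bar>b\<bar>" and u: "1/2 \<le> \<bar>u\<bar>" using half_le_denominators by (auto simp: b_def u_def)
  have "s * u * S = b - r"
    using Pmu_partial_sum_identity[of x lam w eta n] resolvent_factorization
    by (simp add: s_def u_def b_def S_def r_def)
  moreover have "1 / u - s / b * S = (b - s * u * S) / (u * b)"
    using b u by (auto simp: field_simps)
  ultimately have "1 / u - s / b * S = r / (u * b)" by simp
  then have "\<bar>1 / u - s / b * S\<bar> \<le> 4 * \<bar>r\<bar>" using abs_divide_mult_le[OF u b] by simp
  also have "\<dots> \<le> 4 * ((2 + eta) * (M * \<bar>w\<bar>) ^ Suc (Suc n))"
    unfolding r_def using abs_Pmu_tail_le[OF eta M, of w "Suc n"] abs_w_le_half by simp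
  finally show ?thesis by (simp only: s_def b_def u_def S_def)
qed

lemma Pmu_shifted_partial_sum_error:
  assumes w0: "w \<noteq> 0"
  shows "\<bar>(1 + lam * w + (1 + eta) * w\<^sup>2) / (1 + lam * w + eta * w\<^sup>2)
      * (\<Sum>k<Suc (Suc n). poly (Pmu lam eta (Suc k)) x * w ^ k)
      - (x - w) / (1 + lam * w + eta * w\<^sup>2) * (1 / (1 - x * z))\<bar>
    \<le> 4 * ((2 + eta) * M * (M * \<bar>w\<bar>) ^ Suc (Suc n))"
proof -
  define s b u where "s = 1 + lam * w + (1 + eta) * w\<^sup>2" and "b = 1 + lam * w + eta * w\<^sup>2"
    and "u = 1 - x * z"
  define T where "T = (\<Sum>k<Suc (Suc n). poly (Pmu lam eta (Suc k)) x * w ^ k)"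
  define r where "r = Pmu_tail lam eta (Suc (Suc n)) x w"
  have b: "1/2 \<le> \<bar>b\<bar>" and u: "1/2 \<le> \<bar>u\<bar>" using half_le_denominators by (auto simp: b_def u_def)
  have shift: "(\<Sum>k<Suc N. poly (Pmu lam eta k) x * w ^ k)
      = 1 + w * (\<Sum>k<N. poly (Pmu lam eta (Suc k)) x * w ^ k)" for N
    unfolding sum.lessThan_Suc_shift sum_distrib_left
    by (simp del: Pmu.simps add: Pmu.simps(1) mult_ac)
  have "(\<Sum>k<Suc (Suc (Suc n)). poly (Pmu lam eta k) x * w ^ k) = 1 + w * T"
    unfolding T_def by (rule shift)
  then have "s * u * (1 + w * T) = b - r"
    using Pmu_partial_sum_identity[of x lam w eta "Suc n"] resolvent_factorization
    by (simp add: s_def u_def b_def r_def)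
  moreover have "s * u = s - x * w" "b = s - w\<^sup>2"
    using resolvent_factorization by (simp_all add: s_def u_def b_def algebra_simps)
  ultimately have "s * u * w * T - (x - w) * w = - r"
    by algebra
  moreover have "s / b * T - (x - w) / b * (1 / u) = (s * u * w * T - (x - w) * w) / (u * w * b)"
  proof -
    have "b \<noteq> 0" "u \<noteq> 0" using b u by auto
    then show ?thesis using w0 by (simp add: field_simps)
  qed
  ultimately have "s / b * T - (x - w) / b * (1 / u) = - (r / w) / (u * b)"
    by simp
  then have "\<bar>s / b * T - (x - w) / b * (1 / u)\<bar> \<le> 4 * \<bar>r / w\<bar>"
    using abs_divide_mult_le[OF u b, of "- (r / w)"] by simp
  also have "\<bar>r / w\<bar> \<le> (2 + eta) * M * (M * \<bar>w\<bar>) ^ Suc (Suc n)"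
  proof -
    have "\<bar>r\<bar> \<le> (2 + eta) * (M * \<bar>w\<bar>) ^ Suc (Suc (Suc n))"
      unfolding r_def using abs_Pmu_tail_le[OF eta M, of w "Suc (Suc n)"] abs_w_le_half by simp
    also have "\<dots> = ((2 + eta) * M * (M * \<bar>w\<bar>) ^ Suc (Suc n)) * \<bar>w\<bar>"
      by (simp add: mult_ac)
    finally show ?thesis using w0 by (simp add: abs_divide pos_divide_le_eq)
  qed
  then have "4 * \<bar>r / w\<bar> \<le> 4 * ((2 + eta) * M * (M * \<bar>w\<bar>) ^ Suc (Suc n))" by simp
  finally show ?thesis by (simp only: s_def b_def u_def T_def)
qed

end

lemma power_Suc_Suc_LIMSEQ_zero: "\<bar>q::real\<bar> < 1 \<Longrightarrow> (\<lambda>n. c * q ^ Suc (Suc n)) \<longlonglongrightarrow> 0"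
  by (intro tendsto_mult_right_zero LIMSEQ_Suc LIMSEQ_power_zero) auto

lemma (in compactly_supported_prob) Pmu_shift_scaled_partial_sum:
  assumes T: "bounded_L2_op \<mu> T"
    and T_P: "\<And>n. AE x in \<mu>. T (poly (Pmu lam eta n)) x = poly (Pmu lam eta (Suc n)) x"
  shows "AE x in \<mu>. T (\<lambda>t. c * (\<Sum>k<N. poly (Pmu lam eta k) t * w ^ k)) x
    = c * (\<Sum>k<N. poly (Pmu lam eta (Suc k)) x * w ^ k)"
proof -
  have "AE x in \<mu>. T (\<lambda>t. \<Sum>k<N. (c * w ^ k) * poly (Pmu lam eta k) t) x
      = (\<Sum>k<N. (c * w ^ k) * poly (Pmu lam eta (Suc k)) x)"
    using T_P continuous_on_poly[OF continuous_on_id]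
    by (intro bounded_L2_op_sum[OF T, where p = "\<lambda>k. poly (Pmu lam eta k)"]) auto
  then show ?thesis by (simp add: sum_distrib_left mult_ac)
qed

lemma (in compactly_supported_prob) Pmu_shift_resolvent:
  fixes lam eta z w B :: real
  assumes eta: "0 \<le> eta" and T: "bounded_L2_op \<mu> T"
    and T_P: "\<And>n. AE x in \<mu>. T (poly (Pmu lam eta n)) x = poly (Pmu lam eta (Suc n)) x"
    and B: "0 \<le> B" "\<And>x. x \<in> K \<Longrightarrow> \<bar>x\<bar> \<le> B"
    and wz: "w = z * (1 + lam * w + (1 + eta) * w\<^sup>2)"
    and zB: "\<bar>z\<bar> * B \<le> 1/2" and wM: "(B + \<bar>lam\<bar> + eta + 2) * \<bar>w\<bar> \<le> 1/2"
  shows "AE x in \<mu>. T (\<lambda>t. 1 / (1 - t * z)) x = (x - w) / (1 + lam * w + eta * w\<^sup>2) * (1 / (1 - x * z))"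
proof (cases "w = 0")
  case True
  then have "z = 0" using wz by (simp only: True) simp
  then have "(\<lambda>t. 1 / (1 - t * z)) = poly (Pmu lam eta 0)" by (simp add: fun_eq_iff)
  with T_P[of 0] True \<open>z = 0\<close> show ?thesis by simp
next
  case w0: False
  define M where "M = B + \<bar>lam\<bar> + eta + 2"
  define c where "c = (1 + lam * w + (1 + eta) * w\<^sup>2) / (1 + lam * w + eta * w\<^sup>2)"
  define S where "S n = (\<lambda>t. c * (\<Sum>k<Suc (Suc n). poly (Pmu lam eta k) t * w ^ k))" for n
  have M: "\<bar>x\<bar> + \<bar>lam\<bar> + eta + 2 \<le> M" and xz: "\<bar>x * z\<bar> \<le> 1/2" if "x \<in> K" for x
  proof -
    show "\<bar>x\<bar> + \<bar>lam\<bar> + eta + 2 \<le> M" using B(2)[OF that] by (simp add: M_def)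
    have "\<bar>x\<bar> * \<bar>z\<bar> \<le> B * \<bar>z\<bar>" using B(2)[OF that] by (intro mult_right_mono) auto
    then show "\<bar>x * z\<bar> \<le> 1/2" using zB by (simp add: abs_mult mult.commute)
  qed
  have wM': "M * \<bar>w\<bar> \<le> 1/2" using wM by (simp add: M_def)
  show ?thesis
  proof (rule bounded_L2_op_AE_eq_of_uniform_approx[OF prob_space_axioms T])
    show "(\<lambda>t. 1 / (1 - t * z)) \<in> borel_measurable \<mu>"
      "(\<lambda>x. (x - w) / (1 + lam * w + eta * w\<^sup>2) * (1 / (1 - x * z))) \<in> borel_measurable \<mu>"
      by (intro borel_measurable_of_borel; measurable)+
    show "sq_int \<mu> (S n)" for n
      unfolding S_def by (intro sq_int_continuous continuous_intros)
    show "AE x in \<mu>. \<bar>1 / (1 - x * z) - S n x\<bar> \<le> 4 * ((2 + eta) * (M * \<bar>w\<bar>) ^ Suc (Suc n))" for n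
      using Pmu_resolvent_partial_sum_error[OF eta M wM' wz xz]
      by (intro AE_abs_le_of_support) (simp add: S_def c_def)
    have T_S: "AE x in \<mu>. T (S n) x = c * (\<Sum>k<Suc (Suc n). poly (Pmu lam eta (Suc k)) x * w ^ k)" for n
      unfolding S_def by (rule Pmu_shift_scaled_partial_sum[OF T T_P])
    have T_S_approx: "AE x in \<mu>. \<bar>c * (\<Sum>k<Suc (Suc n). poly (Pmu lam eta (Suc k)) x * w ^ k)
        - (x - w) / (1 + lam * w + eta * w\<^sup>2) * (1 / (1 - x * z))\<bar>
      \<le> 4 * ((2 + eta) * M * (M * \<bar>w\<bar>) ^ Suc (Suc n))" for n
      using Pmu_shifted_partial_sum_error[OF eta M wM' wz xz w0]
      by (intro AE_abs_le_of_support) (simp add: c_def)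
    show "AE x in \<mu>. \<bar>T (S n) x - (x - w) / (1 + lam * w + eta * w\<^sup>2) * (1 / (1 - x * z))\<bar>
        \<le> 4 * ((2 + eta) * M * (M * \<bar>w\<bar>) ^ Suc (Suc n))" for n
      using T_S[of n] T_S_approx[of n] by eventually_elim simp
    have q: "\<bar>M * \<bar>w\<bar>\<bar> < 1" using wM' B(1) eta by (simp add: M_def)
    show "(\<lambda>n. 4 * ((2 + eta) * (M * \<bar>w\<bar>) ^ Suc (Suc n))) \<longlonglongrightarrow> 0"
      "(\<lambda>n. 4 * ((2 + eta) * M * (M * \<bar>w\<bar>) ^ Suc (Suc n))) \<longlonglongrightarrow> 0"
      using power_Suc_Suc_LIMSEQ_zero[OF q, of "4 * (2 + eta)"]
        power_Suc_Suc_LIMSEQ_zero[OF q, of "4 * (2 + eta) * M"] by (simp_all only: mult.assoc)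
  qed
qed

lemma Psi_eqD: "Psi lam eta w = z \<Longrightarrow> 1 + lam * w + eta * w\<^sup>2 \<noteq> 0 \<Longrightarrow> w = z * (1 + lam * w + eta * w\<^sup>2)"
  by (auto simp: Psi_def field_simps)

lemma sqrt_discriminant_eq:
  fixes lam E z w :: real
  assumes wz: "w = z * (1 + lam * w + E * w\<^sup>2)"
    and s: "0 < 1 + lam * w + E * w\<^sup>2" and Ew: "E * w\<^sup>2 < 1"
  shows "sqrt ((1 - lam * z)\<^sup>2 - 4 * z\<^sup>2 * E) = 1 - lam * z - 2 * z * E * w"
proof -
  define y where "y = 1 - lam * z - 2 * z * E * w"
  have "(1 - lam * z)\<^sup>2 - 4 * z\<^sup>2 * E = y\<^sup>2" unfolding y_def using wz by algebra
  moreover have "y * (1 + lam * w + E * w\<^sup>2) = 1 - E * w\<^sup>2" unfolding y_def using wz by algebra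
  then have "0 < y" using s Ew by (metis diff_gt_0_iff_gt zero_less_mult_pos2)
  ultimately show ?thesis by (simp add: y_def)
qed

lemma resolvent_coefficient_closed_form:
  fixes lam eta z w x R :: real
  assumes wz: "w = z * (1 + lam * w + (eta + 1) * w\<^sup>2)" and z0: "z \<noteq> 0" and w0: "w \<noteq> 0"
    and b0: "1 + lam * w + eta * w\<^sup>2 \<noteq> 0" and E0: "eta + 1 \<noteq> 0"
    and R: "R = 1 - lam * z - 2 * z * (eta + 1) * w"
  shows "x * (4 * z\<^sup>2 * (eta + 1)\<^sup>2 / ((2 * eta + 1 + lam * z + R) * (1 - lam * z - R)))
      - 2 * z * (eta + 1) / (2 * eta + 1 + lam * z + R) = (x - w) / (1 + lam * w + eta * w\<^sup>2)"
proof -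
  define E u b where "E = eta + 1" and "u = 1 - z * w" and "b = 1 + lam * w + eta * w\<^sup>2"
  have zb: "z * b = w * u" unfolding b_def u_def using wz by algebra
  then have u0: "u \<noteq> 0" using z0 b0 by (auto simp: b_def)
  have den: "2 * eta + 1 + lam * z + R = 2 * E * u" "1 - lam * z - R = 2 * z * E * w"
    by (simp_all add: R E_def u_def algebra_simps)
  have "E \<noteq> 0" using E0 by (simp add: E_def)
  then have "x * (4 * z\<^sup>2 * E\<^sup>2 / ((2 * E * u) * (2 * z * E * w))) - 2 * z * E / (2 * E * u)
      = z * (x - w) / (w * u)"
    using u0 z0 w0 by (simp add: field_simps power2_eq_square)
  then have "x * (4 * z\<^sup>2 * (eta + 1)\<^sup>2 / ((2 * eta + 1 + lam * z + R) * (1 - lam * z - R)))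
      - 2 * z * (eta + 1) / (2 * eta + 1 + lam * z + R) = z * (x - w) / (w * u)"
    unfolding den by (simp only: E_def)
  also have "\<dots> = (x - w) / b" using z0 by (simp flip: zb)
  finally show ?thesis by (simp add: b_def)
qed

lemma (in compactly_supported_prob) Pmu_shift_resolvent_closed_form:
  fixes lam eta z w B :: real
  assumes eta: "0 \<le> eta" and T: "bounded_L2_op \<mu> T"
    and T_P: "\<And>n. AE x in \<mu>. T (poly (Pmu lam eta n)) x = poly (Pmu lam eta (Suc n)) x"
    and B: "0 \<le> B" "\<And>x. x \<in> K \<Longrightarrow> \<bar>x\<bar> \<le> B"
    and wz: "w = z * (1 + lam * w + (1 + eta) * w\<^sup>2)"
    and zB: "\<bar>z\<bar> * B \<le> 1/2" and wM: "(B + \<bar>lam\<bar> + eta + 2) * \<bar>w\<bar> \<le> 1/2"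
    and z0: "z \<noteq> 0"
  defines "R \<equiv> sqrt ((1 - lam * z)\<^sup>2 - 4 * z\<^sup>2 * (eta + 1))"
  shows "AE x in \<mu>. T (\<lambda>t. 1 / (1 - t * z)) x =
    (x * (4 * z\<^sup>2 * (eta + 1)\<^sup>2 / ((2 * eta + 1 + lam * z + R) * (1 - lam * z - R)))
      - 2 * z * (eta + 1) / (2 * eta + 1 + lam * z + R)) * (1 / (1 - x * z))"
proof -
  have wz': "w = z * (1 + lam * w + (eta + 1) * w\<^sup>2)" using wz by (simp add: add.commute)
  have w0: "w \<noteq> 0"
  proof
    assume "w = 0"
    then show False using wz z0 by (simp only:) simp
  qed
  have "\<bar>lam\<bar> * \<bar>w\<bar> \<le> (B + \<bar>lam\<bar> + eta + 2) * \<bar>w\<bar>" "(eta + 1) * \<bar>w\<bar> \<le> (B + \<bar>lam\<bar> + eta + 2) * \<bar>w\<bar>"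
    "1 * \<bar>w\<bar> \<le> (B + \<bar>lam\<bar> + eta + 2) * \<bar>w\<bar>"
    using B(1) eta by (intro mult_right_mono; simp)+
  then have small: "\<bar>lam\<bar> * \<bar>w\<bar> \<le> 1/2" "(eta + 1) * \<bar>w\<bar> \<le> 1/2" "\<bar>w\<bar> \<le> 1/2"
    using wM by linarith+
  have "(eta + 1) * w\<^sup>2 \<le> 1/2 * (1/2)"
    using mult_mono[OF small(2,3)] eta by (simp add: power2_eq_square abs_mult mult.assoc)
  then have R: "R = 1 - lam * z - 2 * z * (eta + 1) * w"
    unfolding R_def using half_le_quadratic[OF _ small(1), of "eta + 1"] eta
    by (intro sqrt_discriminant_eq[OF wz']) auto
  have "1 + lam * w + eta * w\<^sup>2 \<noteq> 0" using half_le_quadratic[OF eta small(1)] by linarith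
  from resolvent_coefficient_closed_form[OF wz' z0 w0 this _ R] eta
    Pmu_shift_resolvent[OF eta T T_P B wz zB wM]
  show ?thesis by simp
qed

lemma Psi_inverse_eventually_fixed_point:
  fixes \<phi> :: "real \<Rightarrow> real" and lam E M :: real
  assumes "\<phi> 0 = 0" and "isCont \<phi> 0" and "\<exists>\<rho>>0. \<forall>z. \<bar>z\<bar> < \<rho> \<longrightarrow> Psi lam E (\<phi> z) = z"
    and "0 \<le> E" and "\<bar>lam\<bar> \<le> M"
  shows "\<forall>\<^sub>F z in nhds 0. M * \<bar>\<phi> z\<bar> \<le> 1/2 \<and> \<phi> z = z * (1 + lam * \<phi> z + E * (\<phi> z)\<^sup>2)"
proof -
  have "(\<phi> \<longlongrightarrow> 0) (nhds 0)"
    using assms(1,2) tendsto_at_iff_tendsto_nhds[of \<phi> 0] by (simp add: isCont_def)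
  then have "\<forall>\<^sub>F z in nhds 0. M * \<bar>\<phi> z\<bar> < 1/2"
    by (intro order_tendstoD(2)[where y = 0]) (auto intro!: tendsto_eq_intros)
  moreover have "\<forall>\<^sub>F z in nhds 0. Psi lam E (\<phi> z) = z"
    using assms(3) by (simp add: eventually_nhds_metric dist_real_def)
  ultimately show ?thesis
  proof eventually_elim
    case (elim z)
    have "\<bar>lam\<bar> * \<bar>\<phi> z\<bar> \<le> M * \<bar>\<phi> z\<bar>" using assms(5) by (intro mult_right_mono) auto
    then have "1/2 \<le> 1 + lam * \<phi> z + E * (\<phi> z)\<^sup>2"
      using elim assms(4) by (intro half_le_quadratic) auto
    then show ?case using elim Psi_eqD[of lam E "\<phi> z" z] by auto
  qed
qed

theorem mainTheorem4:
  fixes lam eta :: real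
    and \<mu> :: "real measure"
    and D :: "(real \<Rightarrow> real) \<Rightarrow> (real \<Rightarrow> real)"
    and \<phi> :: "real \<Rightarrow> real"
  assumes eta: "eta \<ge> 0"
    and sets_mu: "sets \<mu> = sets borel"
    and prob: "prob_space \<mu>"
    and cpt: "\<exists>K. compact K \<and> emeasure \<mu> (UNIV - K) = 0"
    and orth: "\<And>n m. n \<noteq> m \<Longrightarrow>
                 (\<integral>x. poly (Pmu lam eta n) x * poly (Pmu lam eta m) x \<partial>\<mu>) = 0"
    and D_bdd: "bounded_L2_op \<mu> D"
    and D_P: "\<And>n. AE x in \<mu>. D (poly (Pmu lam eta n)) x = poly (Pmu lam eta (Suc n)) x"
    and phi0: "\<phi> 0 = 0"
    and phi_cont: "isCont \<phi> 0"
    and phi_inv: "\<exists>\<rho>>0. \<forall>z. \<bar>z\<bar> < \<rho> \<longrightarrow> Psi lam (eta + 1) (\<phi> z) = z"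
  shows "\<exists>\<epsilon>>0.
     (\<forall>z. \<bar>z\<bar> < \<epsilon> \<longrightarrow>
        (AE x in \<mu>. D (\<lambda>t. 1 / (1 - t * z)) x =
           ((x - \<phi> z) / (1 + lam * \<phi> z + eta * (\<phi> z)\<^sup>2)) * (1 / (1 - x * z)))) \<and>
     (\<forall>z. 0 < \<bar>z\<bar> \<and> \<bar>z\<bar> < \<epsilon> \<longrightarrow>
        (let R = sqrt ((1 - lam * z)\<^sup>2 - 4 * z\<^sup>2 * (eta + 1)) in
        (AE x in \<mu>. D (\<lambda>t. 1 / (1 - t * z)) x =
           (x * (4 * z\<^sup>2 * (eta + 1)\<^sup>2 / ((2 * eta + 1 + lam * z + R) * (1 - lam * z - R)))
             - 2 * z * (eta + 1) / (2 * eta + 1 + lam * z + R)) * (1 / (1 - x * z)))))"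
proof -
  obtain K where K: "compact K" "emeasure \<mu> (UNIV - K) = 0" using cpt by blast
  interpret compactly_supported_prob \<mu> K
    using prob sets_mu K by (simp add: compactly_supported_prob_def compactly_supported_prob_axioms_def)
  obtain B where B: "0 \<le> B" "\<And>x. x \<in> K \<Longrightarrow> \<bar>x\<bar> \<le> B"
    using compact_imp_bounded[OF K(1)] by (metis bounded_real abs_ge_zero order_trans)
  have "\<forall>\<^sub>F z in nhds 0. \<bar>z\<bar> * B < 1/2"
    by (intro order_tendstoD(2)[where y = 0]) (auto intro!: tendsto_eq_intros filterlim_ident)
  moreover have "\<forall>\<^sub>F z in nhds 0. (B + \<bar>lam\<bar> + eta + 2) * \<bar>\<phi> z\<bar> \<le> 1/2
      \<and> \<phi> z = z * (1 + lam * \<phi> z + (1 + eta) * (\<phi> z)\<^sup>2)"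
    using B(1) eta phi_inv[unfolded add.commute[of eta 1]]
    by (intro Psi_inverse_eventually_fixed_point[OF phi0 phi_cont]) auto
  ultimately have "\<forall>\<^sub>F z in nhds 0. \<bar>z\<bar> * B < 1/2 \<and> (B + \<bar>lam\<bar> + eta + 2) * \<bar>\<phi> z\<bar> \<le> 1/2
      \<and> \<phi> z = z * (1 + lam * \<phi> z + (1 + eta) * (\<phi> z)\<^sup>2)"
    by eventually_elim blast
  then obtain \<epsilon> where "\<epsilon> > 0" and \<epsilon>: "\<And>z. \<bar>z\<bar> < \<epsilon> \<Longrightarrow> \<bar>z\<bar> * B < 1/2
      \<and> (B + \<bar>lam\<bar> + eta + 2) * \<bar>\<phi> z\<bar> \<le> 1/2 \<and> \<phi> z = z * (1 + lam * \<phi> z + (1 + eta) * (\<phi> z)\<^sup>2)"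
    unfolding eventually_nhds_metric dist_real_def by auto
  have small: "\<And>z. \<bar>z\<bar> < \<epsilon> \<Longrightarrow> \<bar>z\<bar> * B \<le> 1/2"
    "\<And>z. \<bar>z\<bar> < \<epsilon> \<Longrightarrow> (B + \<bar>lam\<bar> + eta + 2) * \<bar>\<phi> z\<bar> \<le> 1/2"
    and wz: "\<And>z. \<bar>z\<bar> < \<epsilon> \<Longrightarrow> \<phi> z = z * (1 + lam * \<phi> z + (1 + eta) * (\<phi> z)\<^sup>2)"
    using \<epsilon> by (blast intro: less_imp_le)+
  show ?thesis
    unfolding Let_def
    using Pmu_shift_resolvent[OF eta D_bdd D_P B wz small]
      Pmu_shift_resolvent_closed_form[OF eta D_bdd D_P B wz small]
    by (intro exI[of _ \<epsilon>] conjI allI impI \<open>\<epsilon> > 0\<close>) auto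
qed

end
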